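(* Let $k\ge 1$ and let $\mathcal{M}=\{q_1,\dots,q_k\}$ be a finite set of odd primes. Then there exists $n_{\mathcal{M}}\in\mathbb{N}$ such that for every integer $N\ge n_{\mathcal{M}}$ there exists a sequence of $N$ consecutive integers $a, a+1,\dots,a+N-1$ such that no member of the sequence is relatively prime to the product of all the other members. Moreover, for each member $x$ of the sequence, the greatest common divisor of $x$ and the product of all the other members is divisible by some prime $p$ with $p\notin\mathcal{M}$. *)

theory Defs
  imports "HOL-Computational_Algebra.Primes"
begin

end

theory Submission
  imports Defs "HOL-Number_Theory.Number_Theory" "HOL.Binomial_Plus"
begin

(* Centre the block at R = N div 2 and let n = R div 2. By the Chinese remainder theorem choose a
   such that a + R + 1 is even, every odd prime p <= n divides a + R, and each index i for which
   |i - R| is even and has all its prime factors in M u {2} gets a prime of its own from (n, 2n] - M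
   dividing a + i. Then a + i shares the prime 2 with a + i +- 2 if i - R is odd, shares an odd prime
   factor of |i - R| lying outside M with a + R otherwise, and shares its own prime p with a + i +- p
   in the remaining case; a + R itself shares a fixed prime p0 <= n outside M with a + R - p0.
   The exceptional indices are at most 2 (log N)^(k+1) in number, whereas Chebyshev's argument with
   the central binomial coefficient yields about N / log N primes in (n, 2n], enough for large N. *)

section \<open>Exponential versus polynomial growth\<close>

lemma tendsto_power_div_power_two: "((\<lambda>m::nat. real m ^ d / 2 ^ m) \<longlongrightarrow> 0) sequentially"
proof -
  have l2: "ln (2::real) > 0" by simp
  have "filterlim (\<lambda>m::nat. ln 2 * real m) at_top sequentially"
    by (intro filterlim_tendsto_pos_mult_at_top[OF tendsto_const l2] filterlim_real_sequentially)
  hence "((\<lambda>m::nat. (ln 2 * real m) ^ d / exp (ln 2 * real m)) \<longlongrightarrow> 0) sequentially"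
    by (rule filterlim_compose[OF tendsto_power_div_exp_0])
  hence "((\<lambda>m::nat. (ln 2 * real m) ^ d / exp (ln 2 * real m) / ln 2 ^ d) \<longlongrightarrow> 0 / ln 2 ^ d) sequentially"
    by (intro tendsto_divide tendsto_const) auto
  moreover have "(ln 2 * real m) ^ d / exp (ln 2 * real m) / ln 2 ^ d = real m ^ d / 2 ^ m" for m
  proof -
    have "exp (ln 2 * real m) = 2 ^ m"
      by (metis exp_ln exp_of_nat_mult mult.commute zero_less_numeral)
    thus ?thesis using l2 by (simp add: power_mult_distrib)
  qed
  ultimately show ?thesis by simp
qed

lemma power_two_dominates_polynomial: "\<exists>m0. \<forall>m\<ge>m0. c * m ^ d \<le> (2::nat) ^ m"
proof -
  have "\<forall>\<^sub>F m in sequentially. real m ^ d / 2 ^ m < 1 / (real c + 1)"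
    using order_tendstoD(2)[OF tendsto_power_div_power_two] by simp
  then obtain m0 where m0: "\<And>m. m \<ge> m0 \<Longrightarrow> real m ^ d / 2 ^ m < 1 / (real c + 1)"
    by (auto simp: eventually_sequentially)
  have "c * m ^ d \<le> 2 ^ m" if "m \<ge> m0" for m
  proof -
    have "real m ^ d * (real c + 1) < 2 ^ m"
      using m0[OF that] by (simp add: field_simps)
    hence "real m ^ d + real c * real m ^ d < 2 ^ m"
      by (simp add: algebra_simps)
    moreover have "0 \<le> real m ^ d" by simp
    ultimately have "real c * real m ^ d \<le> 2 ^ m" by linarith
    hence "real (c * m ^ d) \<le> real (2 ^ m)" by simp
    thus ?thesis by linarith
  qed
  thus ?thesis by blast
qed

text \<open>With \<open>B\<close> the bit length of \<open>2 * n\<close> and \<open>T = 2 ^ ((B + 1) div 2) > sqrt (2 * n)\<close>, this makes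
  \<open>3 * B * (1 + T + c * B ^ d) < 2 * n\<close> for large \<open>n\<close>, in contrast to Chebyshev's bound below.\<close>

lemma eventually_chebyshev_gap:
  "\<exists>B0. \<forall>B\<ge>B0. 3*B*(1 + 2^((B+1) div 2) + c*B^d) + 1 \<le> (2::nat)^(B-1)"
proof -
  obtain m1 where m1: "\<And>m. m \<ge> m1 \<Longrightarrow> 72 * m ^ 1 \<le> (2::nat) ^ m"
    using power_two_dominates_polynomial by blast
  obtain m2 where m2: "\<And>m. m \<ge> m2 \<Longrightarrow> (8*(4+3*c)) * m ^ (d+1) \<le> (2::nat) ^ m"
    using power_two_dominates_polynomial by blast
  have "3*B*(1 + 2^((B+1) div 2) + c*B^d) + 1 \<le> (2::nat)^(B-1)" if B: "B \<ge> 2*m1 + m2 + 4" for B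
  proof -
    define h where "h = (B+1) div 2"
    have r: "B - h \<ge> m1" "B \<le> 3*(B - h)" "h + (B - h) = B"
      using B unfolding h_def by auto
    have "8*(3*B*2^h) \<le> 72*(B - h)*2^h" using r(2) by simp
    also have "\<dots> \<le> 2^(B - h) * 2^h" using m1[OF r(1)] by simp
    also have "\<dots> = 2^B" using r(3) by (simp add: power_add[symmetric])
    finally have X1: "8*(3*B*2^h) \<le> 2^B" .
    have "B \<ge> 1" using B by simp
    moreover have "B \<le> B^(d+1)" using \<open>B \<ge> 1\<close> by (simp add: self_le_power)
    ultimately have "3*B + 1 \<le> 4 * B^(d+1)" by linarith
    moreover have "3*B*(c*B^d) = 3*c*B^(d+1)" by simp
    ultimately have "3*B*(1 + c*B^d) + 1 \<le> (4+3*c) * B^(d+1)"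
      by (simp add: algebra_simps)
    hence "8*(3*B*(1 + c*B^d) + 1) \<le> 8*((4+3*c) * B^(d+1))" by (rule mult_le_mono2)
    also have "\<dots> = (8*(4+3*c)) * B^(d+1)" by (simp only: mult.assoc)
    also have "\<dots> \<le> 2^B" using m2 B by simp
    finally have X2: "8*(3*B*(1 + c*B^d) + 1) \<le> 2^B" .
    have two_pow: "(2::nat)^B = 2 * 2^(B-1)" using \<open>B \<ge> 1\<close> by (simp add: power_eq_if)
    have add_le: "U + V \<le> W" if "8*U \<le> 2*W" "8*V \<le> 2*W" for U V W :: nat
      using that by linarith
    have "3*B*(1 + 2^h + c*B^d) + 1 = 3*B*2^h + (3*B*(1 + c*B^d) + 1)"
      by (simp add: algebra_simps)
    also have "\<dots> \<le> 2^(B-1)"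
      by (rule add_le[OF X1[unfolded two_pow] X2[unfolded two_pow]])
    finally show ?thesis unfolding h_def .
  qed
  thus ?thesis by blast
qed

section \<open>Legendre's formula and the central binomial coefficient\<close>

lemma card_prime_power_divisors:
  fixes p x K :: nat
  assumes p: "prime p" and x: "0 < x" "x \<le> K"
  shows "card {i\<in>{1..K}. p ^ i dvd x} = multiplicity p x"
proof -
  have "multiplicity p x < 2 ^ multiplicity p x" by (rule less_exp)
  also have "\<dots> \<le> p ^ multiplicity p x"
    using prime_ge_2_nat[OF p] by (rule power_mono) simp
  also have "\<dots> \<le> x" using x(1) multiplicity_dvd[of p x] by (simp add: dvd_imp_le)
  finally have le: "multiplicity p x \<le> K" using x by simp
  have iff: "p ^ i dvd x \<longleftrightarrow> i \<le> multiplicity p x" for i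
    using power_dvd_iff_le_multiplicity[of x p i] x prime_gt_1_nat[OF p] by simp
  have "{i\<in>{1..K}. p ^ i dvd x} = {1..multiplicity p x}"
    using le by (auto simp: iff)
  thus ?thesis by simp
qed

text \<open>Legendre's formula, with the range of summation padded by vanishing terms.\<close>

lemma multiplicity_fact:
  fixes p m K :: nat
  assumes p: "prime p" and "m \<le> K"
  shows "multiplicity p (fact m) = (\<Sum>i\<in>{1..K}. m div p ^ i)"
  using \<open>m \<le> K\<close>
proof (induction m)
  case 0
  then show ?case by simp
next
  case (Suc m)
  have "multiplicity p (fact (Suc m) :: nat) = multiplicity p (Suc m * fact m)"
    by (simp only: fact_Suc of_nat_id)
  also have "\<dots> = multiplicity p (Suc m) + multiplicity p (fact m :: nat)"
    using p by (intro prime_elem_multiplicity_mult_distrib) auto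
  also have "multiplicity p (Suc m) = (\<Sum>i\<in>{1..K}. if p ^ i dvd Suc m then 1 else 0)"
    using card_prime_power_divisors[OF p, of "Suc m" K] Suc.prems
      sum.inter_filter[of "{1..K}" "\<lambda>_. 1::nat" "\<lambda>i. p ^ i dvd Suc m"] by simp
  also have "multiplicity p (fact m :: nat) = (\<Sum>i\<in>{1..K}. m div p ^ i)"
    using Suc by simp
  also have "(\<Sum>i\<in>{1..K}. if p ^ i dvd Suc m then 1 else 0) + (\<Sum>i\<in>{1..K}. m div p ^ i)
      = (\<Sum>i\<in>{1..K}. Suc m div p ^ i)"
    unfolding sum.distrib[symmetric] by (intro sum.cong) (auto simp: div_Suc dvd_eq_mod_eq_0)
  finally show ?case .
qed

lemma double_div_ge: "2 * (n div q) \<le> (2 * n) div (q::nat)"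
proof (cases "q = 0")
  case False
  have "2 * (n div q) * q \<le> 2 * n"
    using div_times_less_eq_dividend[of n q] by simp
  thus ?thesis using False by (simp add: less_eq_div_iff_mult_less_eq)
qed simp

lemma double_div_le: "(2 * n) div q \<le> 2 * (n div q) + (1::nat)"
proof (cases "q = 0")
  case False
  hence q: "0 < q" by simp
  have "n div q * q + n mod q = n" "n mod q < q"
    using q by simp_all
  hence "2 * n < 2 * (n div q) * q + 2 * q" by linarith
  hence "2 * n < (2 * (n div q) + 2) * q" by (simp add: algebra_simps)
  hence "(2 * n) div q < 2 * (n div q) + 2" by (simp only: div_less_iff_less_mult[OF q])
  thus ?thesis by simp
qed simp

lemma multiplicity_central_binomial:
  fixes p n :: nat
  assumes p: "prime p"
  shows "multiplicity p ((2*n) choose n) = (\<Sum>i\<in>{1..2*n}. (2*n) div p^i - 2*(n div p^i))"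
proof -
  have "fact (2*n) = (fact n * fact n * ((2*n) choose n) :: nat)"
    using binomial_fact_lemma[of n "2*n"] by simp
  hence "multiplicity p (fact (2*n) :: nat)
      = 2 * multiplicity p (fact n :: nat) + multiplicity p ((2*n) choose n)"
    using p by (simp add: prime_elem_multiplicity_mult_distrib)
  hence "(\<Sum>i\<in>{1..2*n}. (2*n) div p^i)
      = (\<Sum>i\<in>{1..2*n}. 2*(n div p^i)) + multiplicity p ((2*n) choose n)"
    using multiplicity_fact[OF p, of "2*n" "2*n"] multiplicity_fact[OF p, of n "2*n"]
    by (simp add: sum_distrib_left)
  moreover have "(\<Sum>i\<in>{1..2*n}. (2*n) div p^i - 2*(n div p^i))
      = (\<Sum>i\<in>{1..2*n}. (2*n) div p^i) - (\<Sum>i\<in>{1..2*n}. 2*(n div p^i))"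
    by (rule sum_subtractf_nat) (simp add: double_div_ge)
  ultimately show ?thesis by simp
qed

text \<open>Each term of the sum above is 0 or 1, and it vanishes once \<open>p ^ i > 2 * n\<close>.\<close>

lemma multiplicity_central_binomial_le_card:
  fixes p n :: nat
  assumes p: "prime p"
  shows "multiplicity p ((2*n) choose n) \<le> card {i\<in>{1..2*n}. p ^ i \<le> 2*n}"
proof -
  have "multiplicity p ((2*n) choose n) = (\<Sum>i\<in>{1..2*n}. (2*n) div p^i - 2*(n div p^i))"
    by (rule multiplicity_central_binomial[OF p])
  also have "\<dots> \<le> (\<Sum>i\<in>{1..2*n}. if p ^ i \<le> 2*n then 1 else 0)"
  proof (rule sum_mono)
    fix i
    show "(2*n) div p^i - 2*(n div p^i) \<le> (if p ^ i \<le> 2*n then 1 else 0)"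
      using double_div_le[of n "p ^ i"] by auto
  qed
  also have "\<dots> = card {i\<in>{1..2*n}. p ^ i \<le> 2*n}"
    using sum.inter_filter[of "{1..2*n}" "\<lambda>_. 1::nat" "\<lambda>i. p ^ i \<le> 2*n"] by simp
  finally show ?thesis .
qed

lemma prime_power_multiplicity_central_binomial_le:
  fixes p n :: nat
  assumes p: "prime p" and n: "n \<ge> 1"
  shows "p ^ multiplicity p ((2*n) choose n) \<le> 2*n"
proof (rule ccontr)
  define v where "v = multiplicity p ((2*n) choose n)"
  assume "\<not> p ^ multiplicity p ((2*n) choose n) \<le> 2*n"
  hence big: "2*n < p ^ v" unfolding v_def by simp
  have "{i\<in>{1..2*n}. p ^ i \<le> 2*n} \<subseteq> {1..<v}"
  proof
    fix i assume "i \<in> {i\<in>{1..2*n}. p ^ i \<le> 2*n}"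
    hence "1 \<le> i" "p ^ i < p ^ v" using big by auto
    moreover from this(2) have "i < v" by (rule power_less_imp_less_exp[OF prime_gt_1_nat[OF p]])
    ultimately show "i \<in> {1..<v}" by simp
  qed
  hence "card {i\<in>{1..2*n}. p ^ i \<le> 2*n} \<le> v - 1"
    using card_mono[of "{1..<v}"] by simp
  hence "v = 0" using multiplicity_central_binomial_le_card[OF p, of n] unfolding v_def by simp
  thus False using big n by simp
qed

lemma multiplicity_central_binomial_le_one:
  fixes p n :: nat
  assumes p: "prime p" and "2*n < p*p"
  shows "multiplicity p ((2*n) choose n) \<le> 1"
proof -
  have le1: "i \<le> 1" if "p ^ i \<le> 2*n" for i
  proof (rule ccontr)
    assume "\<not> i \<le> 1"
    hence "p ^ 2 \<le> p ^ i" using prime_gt_0_nat[OF p] by (intro power_increasing) auto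
    thus False using that assms(2) unfolding power2_eq_square by linarith
  qed
  have "{i\<in>{1..2*n}. p ^ i \<le> 2*n} \<subseteq> {1}"
  proof
    fix i assume "i \<in> {i\<in>{1..2*n}. p ^ i \<le> 2*n}"
    thus "i \<in> {1}" using le1[of i] by simp
  qed
  hence "card {i\<in>{1..2*n}. p ^ i \<le> 2*n} \<le> card {1::nat}" by (rule card_mono[rotated]) simp
  thus ?thesis using multiplicity_central_binomial_le_card[OF p, of n] by simp
qed

lemma multiplicity_central_binomial_eq_zero:
  fixes p n :: nat
  assumes p: "prime p" and sq: "2*n < p*p" and "p \<le> n" and "2*n < 3*p"
  shows "multiplicity p ((2*n) choose n) = 0"
proof -
  have term_zero: "(2*n) div p^i - 2*(n div p^i) = 0" if "i \<ge> 1" for i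
  proof (cases "i = 1")
    case True
    have "n div p = 1" "(2*n) div p = 2" using assms(3,4) by (intro div_nat_eqI; simp)+
    thus ?thesis using True by simp
  next
    case False
    hence "p ^ 2 \<le> p ^ i" using that prime_gt_0_nat[OF p] by (intro power_increasing) auto
    hence "2*n < p ^ i" using sq unfolding power2_eq_square by linarith
    thus ?thesis by simp
  qed
  have "(\<Sum>i\<in>{1..2*n}. (2*n) div p^i - 2*(n div p^i)) = 0"
    by (rule sum.neutral) (simp add: term_zero)
  thus ?thesis using multiplicity_central_binomial[OF p, of n] by simp
qed

section \<open>The primorial\<close>

lemma prod_primes_dvd:
  fixes S :: "nat set"
  assumes "finite S" and "\<And>p. p \<in> S \<Longrightarrow> prime p \<and> p dvd c"
  shows "(\<Prod>p\<in>S. p) dvd c"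
  using assms
proof (induction S rule: finite_induct)
  case (insert q S)
  have "coprime q (\<Prod>p\<in>S. p)"
    using insert by (intro prod_coprime_right) (metis insertCI primes_coprime)
  thus ?case using insert by (simp add: divides_mult)
qed simp

lemma binomial_odd_central_le: "(2*j+1) choose j \<le> 4 ^ j"
proof -
  have sym: "(2*j+1) choose j = (2*j+1) choose (j+1)"
    using binomial_symmetric[of j "2*j+1"] by simp
  have "(\<Sum>k\<in>{j, j+1}. (2*j+1) choose k) \<le> (\<Sum>k\<le>2*j+1. (2*j+1) choose k)"
    by (intro sum_mono2) auto
  also have "\<dots> = 2 ^ (2*j+1)" by (rule choose_row_sum)
  finally have "2 * ((2*j+1) choose j) \<le> 2 * 4 ^ j"
    using sym by (simp add: power_mult)
  thus ?thesis by simp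
qed

lemma prod_primes_between_dvd_binomial:
  "(\<Prod>p\<in>{p. prime p \<and> j+1 < p \<and> p \<le> 2*j+1}. p) dvd (2*j+1) choose j"
proof (rule prod_primes_dvd)
  fix p assume p: "p \<in> {p. prime p \<and> j+1 < p \<and> p \<le> 2*j+1}"
  hence "prime p" by simp
  have "fact j * fact (j+1) * ((2*j+1) choose j) = (fact (2*j+1) :: nat)"
    using binomial_fact_lemma[of j "2*j+1"] by (simp add: Suc_diff_le)
  moreover have "p dvd (fact (2*j+1) :: nat)" "\<not> p dvd (fact j :: nat)" "\<not> p dvd (fact (j+1) :: nat)"
    using p by (subst prime_dvd_fact_iff[OF \<open>prime p\<close>]; simp)+
  ultimately show "prime p \<and> p dvd (2*j+1) choose j"
    using \<open>prime p\<close> by (metis prime_dvd_mult_iff)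
qed simp

text \<open>Erd\H{o}s' bound on the primorial: induction over \<open>m\<close>, where for odd \<open>m = 2 * j + 1\<close>
  the primes in \<open>(j + 1, m]\<close> divide \<open>m choose j \<le> 4 ^ j\<close>.\<close>

lemma prod_primes_le_four_power: "(\<Prod>p\<in>{p. prime p \<and> p \<le> m}. p) \<le> (4::nat) ^ m"
proof (induction m rule: less_induct)
  case (less m)
  show ?case
  proof (cases "m \<le> 2")
    case True
    hence "{p::nat. prime p \<and> p \<le> m} = (if m = 2 then {2} else {})"
      by (auto dest: prime_ge_2_nat)
    thus ?thesis by simp
  next
    case m_gt_2: False
    show ?thesis
    proof (cases "even m")
      case True
      hence "\<not> prime m" using m_gt_2 prime_odd_nat[of m] by auto
      hence "{p. prime p \<and> p \<le> m} = {p. prime p \<and> p \<le> m - 1}"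
        using m_gt_2 by (auto simp: le_less)
      hence "(\<Prod>p\<in>{p. prime p \<and> p \<le> m}. p) \<le> 4 ^ (m - 1)"
        using less[of "m - 1"] m_gt_2 by simp
      also have "(4::nat) ^ (m - 1) \<le> 4 ^ m" by (intro power_increasing) auto
      finally show ?thesis .
    next
      case False
      then obtain j where m: "m = 2*j+1" by (rule oddE)
      define A where "A = {p::nat. prime p \<and> p \<le> j+1}"
      define B where "B = {p::nat. prime p \<and> j+1 < p \<and> p \<le> 2*j+1}"
      have "{p. prime p \<and> p \<le> m} = A \<union> B" unfolding A_def B_def m by auto
      moreover have "(\<Prod>p\<in>A \<union> B. p) = (\<Prod>p\<in>A. p) * (\<Prod>p\<in>B. p)"
        by (rule prod.union_disjoint) (auto simp: A_def B_def)
      ultimately have "(\<Prod>p\<in>{p. prime p \<and> p \<le> m}. p) = (\<Prod>p\<in>A. p) * (\<Prod>p\<in>B. p)"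
        by simp
      also have "(\<Prod>p\<in>A. p) \<le> 4 ^ (j+1)"
        using less[of "j+1"] m m_gt_2 unfolding A_def by simp
      also have "(\<Prod>p\<in>B. p) \<le> (2*j+1) choose j"
        unfolding B_def by (intro dvd_imp_le prod_primes_between_dvd_binomial) simp
      also have "\<dots> \<le> 4 ^ j" by (rule binomial_odd_central_le)
      also have "(4::nat) ^ (j+1) * 4 ^ j = 4 ^ m" unfolding m by (simp add: power_add[symmetric])
      finally show ?thesis by simp
    qed
  qed
qed

section \<open>Chebyshev's lower bound for primes in (n, 2n]\<close>

lemma prime_factor_central_binomial_le:
  fixes p n :: nat
  assumes "p \<in> prime_factors ((2*n) choose n)"
  shows "p \<le> 2*n"
proof -
  have "prime p" "p dvd (2*n) choose n" using assms by auto
  moreover have "(2*n) choose n dvd (fact (2*n) :: nat)"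
    using binomial_fact_lemma[of n "2*n"] by (metis dvd_triv_right mult_2 le_add1)
  ultimately have "p dvd (fact (2*n) :: nat)" by (blast intro: dvd_trans)
  thus ?thesis using prime_dvd_fact_iff[OF \<open>prime p\<close>] by simp
qed

lemma prod_small_prime_factors_central_binomial_le:
  fixes n T :: nat
  defines "C \<equiv> (2*n) choose n"
  assumes n: "n \<ge> 1" and T: "2*n < T*T"
  shows "(\<Prod>p\<in>{p\<in>prime_factors C. p*p \<le> 2*n}. p ^ multiplicity p C) \<le> (2*n) ^ T"
proof -
  let ?F = "{p\<in>prime_factors C. p*p \<le> 2*n}"
  have "(\<Prod>p\<in>?F. p ^ multiplicity p C) \<le> (\<Prod>p\<in>?F. 2*n)"
    using prime_power_multiplicity_central_binomial_le n unfolding C_def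
    by (intro prod_mono) auto
  also have "\<dots> = (2*n) ^ card ?F" by simp
  also have "\<dots> \<le> (2*n) ^ T"
  proof (intro power_increasing)
    have "?F \<subseteq> {..<T}"
    proof
      fix p assume "p \<in> ?F"
      hence "p * p < T * T" using T by simp
      thus "p \<in> {..<T}" by (metis lessThan_iff mult_le_mono not_le)
    qed
    thus "card ?F \<le> T" by (metis card_lessThan card_mono finite_lessThan)
  qed (use n in simp)
  finally show ?thesis .
qed

text \<open>A prime factor \<open>p > sqrt (2 * n)\<close> of the central binomial coefficient occurs to the
  first power, and it is either at most \<open>2 * n / 3\<close> or in \<open>(n, 2 * n]\<close>.\<close>

lemma prod_large_prime_factors_central_binomial_le:
  fixes n :: nat
  defines "C \<equiv> (2*n) choose n"
  shows "(\<Prod>p\<in>{p\<in>prime_factors C. 2*n < p*p}. p ^ multiplicity p C)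
    \<le> 4 ^ (2*n div 3) * (2*n) ^ card {p. prime p \<and> n < p \<and> p \<le> 2*n}"
proof -
  let ?F = "{p\<in>prime_factors C. 2*n < p*p}"
  let ?A = "{p. prime p \<and> p \<le> 2*n div 3}"
  let ?B = "{p. prime p \<and> n < p \<and> p \<le> 2*n}"
  have pos: "multiplicity p C \<ge> 1" if "p \<in> prime_factors C" for p
    using that by (simp add: prime_factors_multiplicity)
  have "(\<Prod>p\<in>?F. p ^ multiplicity p C) = (\<Prod>p\<in>?F. p)"
  proof (rule prod.cong[OF refl])
    fix p assume "p \<in> ?F"
    hence "prime p" "2*n < p*p" "multiplicity p C \<ge> 1" using pos by auto
    hence "multiplicity p C = 1"
      using multiplicity_central_binomial_le_one[of p n] unfolding C_def by simp
    thus "p ^ multiplicity p C = p" by simp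
  qed
  also have "\<dots> \<le> (\<Prod>p\<in>?A \<union> ?B. p)"
  proof (rule dvd_imp_le)
    have "?F \<subseteq> ?A \<union> ?B"
    proof
      fix p assume p: "p \<in> ?F"
      hence "prime p" "p \<le> 2*n" "2*n < p*p"
        using prime_factor_central_binomial_le unfolding C_def by auto
      moreover have "\<not> (2*n div 3 < p \<and> p \<le> n)"
        using p pos multiplicity_central_binomial_eq_zero[OF \<open>prime p\<close> \<open>2*n < p*p\<close>]
        unfolding C_def by fastforce
      ultimately show "p \<in> ?A \<union> ?B" by auto
    qed
    thus "(\<Prod>p\<in>?F. p) dvd (\<Prod>p\<in>?A \<union> ?B. p)" by (intro prod_dvd_prod_subset) auto
  qed (auto intro: prime_gt_0_nat)
  also have "\<dots> = (\<Prod>p\<in>?A. p) * (\<Prod>p\<in>?B. p)"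
    by (rule prod.union_disjoint) auto
  also have "\<dots> \<le> 4 ^ (2*n div 3) * (2*n) ^ card ?B"
  proof (rule mult_le_mono)
    show "(\<Prod>p\<in>?A. p) \<le> 4 ^ (2*n div 3)" by (rule prod_primes_le_four_power)
    have "(\<Prod>p\<in>?B. p) \<le> (\<Prod>p\<in>?B. 2*n)" by (intro prod_mono) auto
    thus "(\<Prod>p\<in>?B. p) \<le> (2*n) ^ card ?B" by simp
  qed
  finally show ?thesis .
qed

lemma central_binomial_le:
  fixes n T :: nat
  assumes "n \<ge> 1" and "2*n < T*T"
  shows "(2*n) choose n
    \<le> (2*n) ^ T * (4 ^ (2*n div 3) * (2*n) ^ card {p. prime p \<and> n < p \<and> p \<le> 2*n})"
proof -
  define C where "C = (2*n) choose n"
  define F1 where "F1 = {p\<in>prime_factors C. p*p \<le> 2*n}"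
  define F2 where "F2 = {p\<in>prime_factors C. 2*n < p*p}"
  have "C = (\<Prod>p\<in>prime_factors C. p ^ multiplicity p C)"
    using prod_prime_factors[of C] unfolding C_def by simp
  also have "prime_factors C = F1 \<union> F2" unfolding F1_def F2_def by auto
  also have "(\<Prod>p\<in>F1 \<union> F2. p ^ multiplicity p C)
      = (\<Prod>p\<in>F1. p ^ multiplicity p C) * (\<Prod>p\<in>F2. p ^ multiplicity p C)"
    by (rule prod.union_disjoint) (auto simp: F1_def F2_def)
  also have "\<dots> \<le> (2*n) ^ T * (4 ^ (2*n div 3) * (2*n) ^ card {p. prime p \<and> n < p \<and> p \<le> 2*n})"
    unfolding F1_def F2_def C_def
    by (intro mult_le_mono prod_small_prime_factors_central_binomial_le
        prod_large_prime_factors_central_binomial_le assms)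
  finally show ?thesis unfolding C_def .
qed

text \<open>Chebyshev's lower bound for the number of primes in \<open>(n, 2 * n]\<close>, in the crude form
  \<open>\<pi>(2 * n) - \<pi>(n) \<ge> 2 * n / (3 * B) - 1 - T\<close> with \<open>B \<approx> log\<^sub>2 (2 * n)\<close> and \<open>T \<approx> sqrt (2 * n)\<close>;
  it comes from comparing \<open>4 ^ n / (2 * n) \<le> (2 * n choose n)\<close> with the bound above.\<close>

lemma card_primes_between_ge:
  fixes n B T :: nat
  assumes n: "n \<ge> 1" and B: "2*n < 2^B" and T: "2*n < T*T"
  shows "2*n \<le> 3*B*(1 + T + card {p. prime p \<and> n < p \<and> p \<le> 2*n})"
proof -
  define P where "P = card {p. prime p \<and> n < p \<and> p \<le> 2*n}"
  have "real (4 ^ n) \<le> real (((2*n) choose n) * (2*n))"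
    using central_binomial_lower_bound[of n] n by (simp add: field_simps)
  hence "4 ^ n \<le> ((2*n) choose n) * (2*n)" by (simp only: of_nat_le_iff)
  also have "\<dots> \<le> (2*n) ^ T * (4 ^ (2*n div 3) * (2*n) ^ P) * (2*n)"
    using central_binomial_le[OF n T] unfolding P_def by simp
  also have "\<dots> = 4 ^ (2*n div 3) * (2*n) ^ (1 + T + P)"
    by (simp add: power_add algebra_simps)
  also have "\<dots> \<le> 4 ^ (2*n div 3) * (2^B) ^ (1 + T + P)"
    using B by (intro mult_le_mono2 power_mono) auto
  also have "\<dots> = 2 ^ (2*(2*n div 3) + B*(1 + T + P))"
    by (simp add: power_mult power_add)
  finally have "(2::nat) ^ (2*n) \<le> 2 ^ (2*(2*n div 3) + B*(1 + T + P))"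
    by (simp add: power_mult)
  hence "2*n \<le> 2*(2*n div 3) + B*(1 + T + P)" by simp
  thus ?thesis unfolding P_def by linarith
qed

lemma eventually_many_primes_between:
  "\<exists>n0::nat. \<forall>n\<ge>n0. \<exists>B. 2*n + 1 < 2^B \<and> c * B^d \<le> card {p. prime p \<and> n < p \<and> p \<le> 2*n}"
proof -
  obtain B0 where B0: "\<And>B. B \<ge> B0 \<Longrightarrow> 3*B*(1 + 2^((B+1) div 2) + c*B^d) + 1 \<le> (2::nat)^(B-1)"
    using eventually_chebyshev_gap by blast
  have "\<exists>B. 2*n + 1 < 2^B \<and> c * B^d \<le> card {p. prime p \<and> n < p \<and> p \<le> 2*n}"
    if n: "n \<ge> 2^B0" for n :: nat
  proof -
    obtain B' where B': "2^B' \<le> 2*n + 1" "2*n + 1 < (2::nat)^(B'+1)"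
      using ex_power_ivl1[of 2 "2*n+1"] by auto
    define B where "B = B' + 1"
    have B: "2*n + 1 < 2^B" "2^(B-1) \<le> 2*n + 1" "B \<ge> 1" using B' unfolding B_def by auto
    define T where "T = (2::nat) ^ ((B+1) div 2)"
    define P where "P = card {p. prime p \<and> n < p \<and> p \<le> 2*n}"
    have "(2::nat) ^ B0 < 2 ^ B" using n B by linarith
    hence "B \<ge> B0" by simp
    have "(2::nat) ^ B \<le> 2 ^ (2*((B+1) div 2))" by (intro power_increasing) auto
    also have "\<dots> = T*T" unfolding T_def by (simp add: power_add[symmetric] mult_2)
    finally have "2*n < T*T" using B by linarith
    moreover have "n \<ge> 1" using n by (meson le_trans one_le_numeral one_le_power)
    ultimately have "2*n \<le> 3*B*(1 + T + P)"
      unfolding P_def using card_primes_between_ge[of n B T] B by simp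
    moreover have "3*B*(1 + T + c*B^d) + 1 \<le> 2*n + 1"
      using B0[OF \<open>B \<ge> B0\<close>] B unfolding T_def by linarith
    ultimately have "3*B*(1 + T + c*B^d) \<le> 3*B*(1 + T + P)" by linarith
    hence "c*B^d \<le> P" using \<open>B \<ge> 1\<close> by simp
    thus ?thesis using B unfolding P_def by auto
  qed
  thus ?thesis by blast
qed

section \<open>Smooth numbers\<close>

definition smooth :: "nat set \<Rightarrow> nat \<Rightarrow> bool" where
  "smooth Q m \<longleftrightarrow> (\<forall>p. prime p \<longrightarrow> p dvd m \<longrightarrow> p \<in> Q)"

lemma prod_multiplicity_eq_if_smooth:
  fixes Q :: "nat set"
  assumes Q: "finite Q" "\<And>q. q \<in> Q \<Longrightarrow> prime q" and "smooth Q m" "0 < m"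
  shows "(\<Prod>q\<in>Q. q ^ multiplicity q m) = m"
proof -
  have "prime_factors m \<subseteq> Q" using assms(3) unfolding smooth_def by auto
  hence "(\<Prod>q\<in>Q. q ^ multiplicity q m) = (\<Prod>q\<in>prime_factors m. q ^ multiplicity q m)"
  proof (rule prod.mono_neutral_right[OF Q(1)])
    show "\<forall>q\<in>Q - prime_factors m. q ^ multiplicity q m = 1"
    proof
      fix q assume "q \<in> Q - prime_factors m"
      hence "\<not> q dvd m" using Q(2) \<open>0 < m\<close> by (auto simp: in_prime_factors_iff)
      thus "q ^ multiplicity q m = 1" by (simp add: not_dvd_imp_multiplicity_0)
    qed
  qed
  also have "\<dots> = m" using prod_prime_factors[of m] \<open>0 < m\<close> by simp
  finally show ?thesis .
qed

text \<open>A \<open>Q\<close>-smooth number below \<open>2 ^ B\<close> is determined by its exponents at the primes of \<open>Q\<close>,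
  each of which is less than \<open>B\<close>.\<close>

lemma card_smooth_le:
  fixes Q :: "nat set" and X B :: nat
  assumes Q: "finite Q" "\<And>q. q \<in> Q \<Longrightarrow> prime q" and X: "X < 2 ^ B"
  shows "card {m\<in>{1..X}. smooth Q m} \<le> B ^ card Q"
proof -
  let ?S = "{m\<in>{1..X}. smooth Q m}"
  let ?g = "\<lambda>e. \<Prod>q\<in>Q. q ^ e q"
  have "?S \<subseteq> ?g ` (PiE Q (\<lambda>_. {..<B}))"
  proof
    fix m assume m: "m \<in> ?S"
    hence "0 < m" "m \<le> X" by auto
    define e where "e = restrict (\<lambda>q. multiplicity q m) Q"
    have "multiplicity q m < B" if "q \<in> Q" for q
    proof -
      have "q ^ multiplicity q m \<le> m" using \<open>0 < m\<close> by (intro dvd_imp_le multiplicity_dvd)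
      also have "\<dots> < 2 ^ B" using \<open>m \<le> X\<close> X by linarith
      also have "(2::nat) ^ B \<le> q ^ B" using prime_ge_2_nat[OF Q(2)[OF that]] by (rule power_mono) simp
      finally show ?thesis by (rule power_less_imp_less_exp[OF prime_gt_1_nat[OF Q(2)[OF that]]])
    qed
    hence "e \<in> PiE Q (\<lambda>_. {..<B})" unfolding e_def by auto
    have "?g e = (\<Prod>q\<in>Q. q ^ multiplicity q m)" unfolding e_def by (intro prod.cong) auto
    also have "\<dots> = m" using m \<open>0 < m\<close> by (intro prod_multiplicity_eq_if_smooth Q) auto
    finally have "m = ?g e" by (rule sym)
    thus "m \<in> ?g ` (PiE Q (\<lambda>_. {..<B}))" using \<open>e \<in> PiE Q (\<lambda>_. {..<B})\<close> by (rule image_eqI)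
  qed
  hence "card ?S \<le> card (?g ` (PiE Q (\<lambda>_. {..<B})))"
    by (intro card_mono finite_imageI finite_PiE Q(1)) auto
  also have "\<dots> \<le> card (PiE Q (\<lambda>_. {..<B}))" by (rule card_image_le) (simp add: Q(1) finite_PiE)
  also have "\<dots> = B ^ card Q" by (simp add: card_PiE Q(1))
  finally show ?thesis .
qed

lemma card_offsets_le:
  fixes N R :: nat
  assumes "N \<le> 2*R + 1"
  shows "card {i\<in>{0..<N}. i \<noteq> R \<and> P (nat \<bar>int i - int R\<bar>)} \<le> 2 * card {m\<in>{1..R}. P m}"
proof -
  let ?S = "{m\<in>{1..R}. P m}"
  have "{i\<in>{0..<N}. i \<noteq> R \<and> P (nat \<bar>int i - int R\<bar>)} \<subseteq> (\<lambda>m. R + m) ` ?S \<union> (\<lambda>m. R - m) ` ?S"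
  proof
    fix i assume i: "i \<in> {i\<in>{0..<N}. i \<noteq> R \<and> P (nat \<bar>int i - int R\<bar>)}"
    show "i \<in> (\<lambda>m. R + m) ` ?S \<union> (\<lambda>m. R - m) ` ?S"
    proof (cases "R \<le> i")
      case True
      hence "i - R \<in> ?S" "i = R + (i - R)" using i assms by (auto simp: nat_diff_distrib)
      thus ?thesis by blast
    next
      case False
      hence "R - i \<in> ?S" "i = R - (R - i)" using i by (auto simp: nat_diff_distrib)
      thus ?thesis by blast
    qed
  qed
  hence "card {i\<in>{0..<N}. i \<noteq> R \<and> P (nat \<bar>int i - int R\<bar>)}
      \<le> card ((\<lambda>m. R + m) ` ?S \<union> (\<lambda>m. R - m) ` ?S)"
    by (intro card_mono) auto
  also have "\<dots> \<le> card ((\<lambda>m. R + m) ` ?S) + card ((\<lambda>m. R - m) ` ?S)" by (rule card_Un_le)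
  also have "\<dots> \<le> card ?S + card ?S" by (intro add_mono card_image_le) simp_all
  finally show ?thesis by simp
qed

lemma card_smooth_offsets_le:
  fixes Q :: "nat set" and N R B :: nat
  assumes "finite Q" "\<And>q. q \<in> Q \<Longrightarrow> prime q" "N \<le> 2*R + 1" "R < 2^B"
  shows "card {i\<in>{0..<N}. i \<noteq> R \<and> smooth Q (nat \<bar>int i - int R\<bar>)} \<le> 2 * B ^ card Q"
proof -
  have "card {i\<in>{0..<N}. i \<noteq> R \<and> smooth Q (nat \<bar>int i - int R\<bar>)}
      \<le> 2 * card {m\<in>{1..R}. smooth Q m}"
    using assms(3) by (rule card_offsets_le)
  also have "\<dots> \<le> 2 * B ^ card Q" using card_smooth_le[OF assms(1,2,4)] by simp
  finally show ?thesis .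
qed

section \<open>Construction of the block\<close>

definition shares_prime_in_block :: "nat set \<Rightarrow> int \<Rightarrow> nat \<Rightarrow> nat \<Rightarrow> bool" where
  "shares_prime_in_block M a N i \<longleftrightarrow>
     (\<exists>p j. prime p \<and> p \<notin> M \<and> j < N \<and> j \<noteq> i \<and> int p dvd a + int i \<and> int p dvd a + int j)"

lemma shares_prime_in_blockI:
  assumes "prime p" and "p \<notin> M" and "int p dvd a + int i" and "i < N" and "i + p < N \<or> p \<le> i"
  shows "shares_prime_in_block M a N i"
proof -
  have "p > 0" using assms(1) by (simp add: prime_gt_0_nat)
  have "\<exists>j<N. j \<noteq> i \<and> int p dvd a + int j"
  proof (cases "i + p < N")
    case True
    have "a + int (i + p) = (a + int i) + int p" by simp
    hence "int p dvd a + int (i + p)" by (simp only:) (rule dvd_add[OF assms(3) dvd_refl])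
    thus ?thesis using True \<open>p > 0\<close> by (intro exI[of _ "i + p"]) auto
  next
    case False
    hence "p \<le> i" using assms(5) by simp
    hence "a + int (i - p) = (a + int i) - int p" by (simp add: of_nat_diff)
    hence "int p dvd a + int (i - p)" by (simp only:) (rule dvd_diff[OF assms(3) dvd_refl])
    thus ?thesis using \<open>p \<le> i\<close> \<open>p > 0\<close> assms(4) by (intro exI[of _ "i - p"]) auto
  qed
  thus ?thesis using assms(1-3) unfolding shares_prime_in_block_def by blast
qed

lemma ex_int_dvd_add:
  fixes A :: "nat set" and u :: "nat \<Rightarrow> nat"
  assumes "finite A" and "\<And>p. p \<in> A \<Longrightarrow> prime p"
  shows "\<exists>a::int. \<forall>p\<in>A. int p dvd a + int (u p)"
proof -
  have "\<forall>p\<in>A. \<forall>q\<in>A. p \<noteq> q \<longrightarrow> coprime (id p) (id q)"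
    using assms(2) by (auto intro: primes_coprime)
  then obtain x where x: "\<forall>p\<in>A. [x = u p] (mod id p)"
    using chinese_remainder_nat[OF assms(1)] by blast
  have "int p dvd - int x + int (u p)" if "p \<in> A" for p
  proof -
    have "[int x = int (u p)] (mod int p)" using x that by (simp add: cong_int_iff)
    hence "int p dvd int x - int (u p)" by (simp add: cong_iff_dvd_diff)
    hence "int p dvd - (int x - int (u p))" by (simp only: dvd_minus_iff)
    thus ?thesis by simp
  qed
  thus ?thesis by blast
qed

lemma all_share_prime_in_block:
  fixes M :: "nat set" and a :: int and N R n p0 :: nat
  assumes "2 \<notin> M" and "2*R \<le> N" "N \<le> 2*R + 1" and "2*n \<le> R" "R \<le> 2*n + 1"
    and p0: "prime p0" "2 < p0" "p0 \<le> n" "p0 \<notin> M"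
    and two: "2 dvd a + int (R + 1)"
    and centre: "\<And>p. prime p \<Longrightarrow> 2 < p \<Longrightarrow> p \<le> n \<Longrightarrow> int p dvd a + int R"
    and smooth_indices: "\<And>i. i < N \<Longrightarrow> i \<noteq> R \<Longrightarrow> even (nat \<bar>int i - int R\<bar>) \<Longrightarrow>
          smooth (insert 2 M) (nat \<bar>int i - int R\<bar>) \<Longrightarrow>
          \<exists>p. prime p \<and> p \<notin> M \<and> n < p \<and> p \<le> 2*n \<and> int p dvd a + int i"
    and "i < N"
  shows "shares_prime_in_block M a N i"
proof -
  define d where "d = nat \<bar>int i - int R\<bar>"
  have "d \<le> R" using assms(2,3) \<open>i < N\<close> p0(2,3) unfolding d_def by auto
  consider "i = R" | "odd d" | "i \<noteq> R" "even d" "\<not> smooth (insert 2 M) d"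
    | "i \<noteq> R" "even d" "smooth (insert 2 M) d" by blast
  thus ?thesis
  proof cases
    case 1
    thus ?thesis using p0 centre[OF p0(1-3)] assms(4) \<open>i < N\<close>
      by (intro shares_prime_in_blockI[of p0]) auto
  next
    case 2
    hence "odd (int i - int R)" unfolding d_def by (simp add: even_nat_iff)
    hence "2 dvd (a + int (R + 1)) + (int i - int R - 1)" using two by simp
    hence "int 2 dvd a + int i" by simp
    moreover have "i + 2 < N \<or> 2 \<le> i" using assms(2,4) p0(2,3) by linarith
    ultimately show ?thesis using assms(1) \<open>i < N\<close> by (intro shares_prime_in_blockI[of 2]) auto
  next
    case 3
    then obtain p where p: "prime p" "p dvd d" "p \<notin> insert 2 M"
      unfolding smooth_def by blast
    have "2 < p" using p(1,3) prime_ge_2_nat[of p] by auto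
    have "d > 0" using 3 unfolding d_def by simp
    have "2 * p dvd d"
      using p 3 primes_coprime[of 2 p] by (intro divides_mult) auto
    hence "2 * p \<le> d" using \<open>d > 0\<close> by (rule dvd_imp_le)
    hence "p \<le> n" using \<open>d \<le> R\<close> assms(5) by linarith
    have "int p dvd int i - int R" using p(2) unfolding d_def by simp
    hence "int p dvd (a + int R) + (int i - int R)"
      using dvd_add[OF centre[OF p(1) \<open>2 < p\<close> \<open>p \<le> n\<close>]] by blast
    moreover have "i + p < N \<or> p \<le> i"
      using \<open>2 * p \<le> d\<close> assms(2) \<open>i < N\<close> unfolding d_def by linarith
    ultimately show ?thesis using p \<open>i < N\<close> by (intro shares_prime_in_blockI[of p]) auto
  next
    case 4
    then obtain p where p: "prime p" "p \<notin> M" "n < p" "p \<le> 2*n" "int p dvd a + int i"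
      using smooth_indices \<open>i < N\<close> unfolding d_def by blast
    have "i + p < N \<or> p \<le> i" using p(3,4) assms(2,4) 4(1) by linarith
    thus ?thesis using p \<open>i < N\<close> by (intro shares_prime_in_blockI[of p]) auto
  qed
qed

lemma ex_residues_for_block:
  fixes E :: "nat set" and f :: "nat \<Rightarrow> nat" and n R :: nat
  assumes "finite E" and "inj_on f E" and f: "\<And>i. i \<in> E \<Longrightarrow> prime (f i) \<and> n < f i"
    and "n \<ge> 2"
  shows "\<exists>a::int. 2 dvd a + int (R + 1) \<and> (\<forall>p. prime p \<and> 2 < p \<and> p \<le> n \<longrightarrow> int p dvd a + int R)
    \<and> (\<forall>i\<in>E. int (f i) dvd a + int i)"
proof -
  define A where "A = insert 2 ({p. prime p \<and> 2 < p \<and> p \<le> n} \<union> f ` E)"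
  define u where "u p = (if p = 2 then R + 1 else if p \<le> n then R else inv_into E f p)" for p
  have "finite A" using assms(1) unfolding A_def by simp
  moreover have "prime p" if "p \<in> A" for p
    using that f two_is_prime_nat unfolding A_def by blast
  ultimately obtain a where a: "\<And>p. p \<in> A \<Longrightarrow> int p dvd a + int (u p)"
    using ex_int_dvd_add[of A u] by blast
  have "2 dvd a + int (R + 1)" using a[of 2] unfolding A_def u_def by simp
  moreover have "int p dvd a + int R" if "prime p" "2 < p" "p \<le> n" for p
    using a[of p] that unfolding A_def u_def by simp
  moreover have "int (f i) dvd a + int i" if "i \<in> E" for i
  proof -
    have "f i \<noteq> 2" "\<not> f i \<le> n" using f[OF that] \<open>n \<ge> 2\<close> by auto
    thus ?thesis using a[of "f i"] that \<open>inj_on f E\<close> unfolding A_def u_def by simp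
  qed
  ultimately show ?thesis by blast
qed

lemma ex_block_sharing_primes:
  fixes M :: "nat set" and N R n p0 B :: nat
  assumes M: "finite M" "\<And>q. q \<in> M \<Longrightarrow> prime q" "2 \<notin> M"
    and NR: "2*R \<le> N" "N \<le> 2*R + 1" "2*n \<le> R" "R \<le> 2*n + 1"
    and p0: "prime p0" "2 < p0" "p0 \<le> n" "p0 \<notin> M"
    and B: "R < 2^B" "2 * B^(card M + 1) + card M \<le> card {p. prime p \<and> n < p \<and> p \<le> 2*n}"
  shows "\<exists>a. \<forall>i<N. shares_prime_in_block M a N i"
proof -
  define E where "E = {i\<in>{0..<N}. i \<noteq> R \<and> smooth (insert 2 M) (nat \<bar>int i - int R\<bar>)}"
  define SP where "SP = {p. prime p \<and> n < p \<and> p \<le> 2*n} - M"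
  have "card E \<le> 2 * B ^ card (insert 2 M)"
    unfolding E_def using M NR B(1) by (intro card_smooth_offsets_le) auto
  also have "\<dots> = 2 * B ^ (card M + 1)" using M(1,3) by simp
  also have "\<dots> \<le> card SP"
    using B(2) diff_card_le_card_Diff[OF M(1), of "{p. prime p \<and> n < p \<and> p \<le> 2*n}"]
    unfolding SP_def by linarith
  finally obtain f where f: "f ` E \<subseteq> SP" "inj_on f E"
    using card_le_inj[of E SP] unfolding E_def SP_def by auto
  have "n \<ge> 2" using p0 by simp
  moreover have "finite E" unfolding E_def by simp
  moreover have "prime (f i) \<and> n < f i" if "i \<in> E" for i using f(1) that unfolding SP_def by auto
  ultimately obtain a where a: "2 dvd a + int (R + 1)"
      "\<forall>p. prime p \<and> 2 < p \<and> p \<le> n \<longrightarrow> int p dvd a + int R"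
      "\<forall>i\<in>E. int (f i) dvd a + int i"
    using ex_residues_for_block[OF _ f(2), of n R] by blast
  have centre: "\<And>p. prime p \<Longrightarrow> 2 < p \<Longrightarrow> p \<le> n \<Longrightarrow> int p dvd a + int R" using a(2) by blast
  have "shares_prime_in_block M a N i" if "i < N" for i
  proof (rule all_share_prime_in_block[OF M(3) NR p0 a(1) centre _ that])
    fix i assume "i < N" "i \<noteq> R" "even (nat \<bar>int i - int R\<bar>)"
      "smooth (insert 2 M) (nat \<bar>int i - int R\<bar>)"
    hence "i \<in> E" unfolding E_def by simp
    thus "\<exists>p. prime p \<and> p \<notin> M \<and> n < p \<and> p \<le> 2*n \<and> int p dvd a + int i"
      using f(1) a(3) unfolding SP_def by blast
  qed
  thus ?thesis by blast
qed

lemma eventually_all_share_prime_in_block: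
  fixes M :: "nat set"
  assumes M: "finite M" "\<And>q. q \<in> M \<Longrightarrow> prime q" "2 \<notin> M"
  shows "\<exists>n0. \<forall>N\<ge>n0. \<exists>a. \<forall>i<N. shares_prime_in_block M a N i"
proof -
  define k where "k = card M"
  obtain p0 where p0: "prime p0" "Max (insert 2 M) < p0" using bigger_prime by blast
  have "2 < p0" "p0 \<notin> M" using p0(2) M(1) by (auto simp: Max_less_iff)
  obtain n1 where n1: "\<And>n::nat. n \<ge> n1 \<Longrightarrow>
      \<exists>B. 2*n + 1 < 2^B \<and> (k+2) * B^(k+1) \<le> card {p. prime p \<and> n < p \<and> p \<le> 2*n}"
    using eventually_many_primes_between by blast
  have "\<exists>a. \<forall>i<N. shares_prime_in_block M a N i" if N: "N \<ge> 4*(n1 + p0) + 4" for N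
  proof -
    define R where "R = N div 2"
    define n where "n = R div 2"
    have NR: "2*R \<le> N" "N \<le> 2*R + 1" "2*n \<le> R" "R \<le> 2*n + 1"
      unfolding R_def n_def by auto
    have "n \<ge> n1" "n \<ge> p0" using N NR by simp_all
    with n1 obtain B where B: "2*n + 1 < 2^B"
      "(k+2) * B^(k+1) \<le> card {p. prime p \<and> n < p \<and> p \<le> 2*n}"
      by blast
    have "k * 1 \<le> k * B^(k+1)" using B(1) by (intro mult_le_mono2 one_le_power) (cases B, auto)
    hence "2 * B^(card M + 1) + card M \<le> card {p. prime p \<and> n < p \<and> p \<le> 2*n}"
      using B(2) unfolding k_def distrib_right by linarith
    moreover have "R < 2^B" using B(1) NR by linarith
    ultimately show ?thesis
      using ex_block_sharing_primes[OF M NR p0(1) \<open>2 < p0\<close> \<open>n \<ge> p0\<close> \<open>p0 \<notin> M\<close>] by blast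
  qed
  thus ?thesis by blast
qed

lemma prime_dvd_gcd_prod_others:
  fixes x :: "nat \<Rightarrow> int"
  assumes "finite J" and "j \<in> J" "j \<noteq> i" and "p dvd x i" "p dvd x j"
  shows "p dvd gcd (x i) (\<Prod>j\<in>J - {i}. x j)"
proof (rule gcd_greatest)
  have "x j dvd (\<Prod>j\<in>J - {i}. x j)" using assms(1-3) by (intro dvd_prodI) auto
  thus "p dvd (\<Prod>j\<in>J - {i}. x j)" by (rule dvd_trans[OF assms(5)])
qed fact

lemma shares_prime_in_block_imp_gcd:
  fixes M :: "int set" and a :: int
  assumes "shares_prime_in_block (nat ` M) a N i"
  shows "gcd (a + int i) (\<Prod>j\<in>{0..<N} - {i}. a + int j) \<noteq> 1 \<and>
    (\<exists>p. prime p \<and> p \<notin> M \<and> p dvd gcd (a + int i) (\<Prod>j\<in>{0..<N} - {i}. a + int j))"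
proof -
  let ?g = "gcd (a + int i) (\<Prod>j\<in>{0..<N} - {i}. a + int j)"
  obtain p j where p: "prime p" "p \<notin> nat ` M" "j < N" "j \<noteq> i"
      "int p dvd a + int i" "int p dvd a + int j"
    using assms unfolding shares_prime_in_block_def by blast
  have "int p dvd ?g"
    using p prime_dvd_gcd_prod_others[where J = "{0..<N}" and x = "\<lambda>j. a + int j", of j i "int p"]
    by simp
  moreover have "prime (int p)" using p(1) by simp
  moreover have "int p \<notin> M" using p(2) by (metis image_eqI nat_int)
  moreover have "?g \<noteq> 1" using \<open>int p dvd ?g\<close> \<open>prime (int p)\<close> not_prime_unit by force
  ultimately show ?thesis by blast
qed

theorem theorem2p1:
  fixes M :: "int set" and k :: nat
  assumes "k \<ge> 1" and "finite M" and "card M = k"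
    and "\<forall>q\<in>M. prime q \<and> odd q"
  shows "\<exists>n\<^sub>M :: nat. \<forall>N :: nat. N \<ge> n\<^sub>M \<longrightarrow>
           (\<exists>a :: int. \<forall>i \<in> {0..<N}.
              gcd (a + int i) (\<Prod>j \<in> {0..<N} - {i}. a + int j) \<noteq> 1 \<and>
              (\<exists>p :: int. prime p \<and> p \<notin> M \<and>
                 p dvd gcd (a + int i) (\<Prod>j \<in> {0..<N} - {i}. a + int j)))"
proof -
  have "2 \<notin> nat ` M"
  proof
    assume "2 \<in> nat ` M"
    then obtain q where q: "q \<in> M" "nat q = 2" by auto
    hence "prime q" "odd q" using assms(4) by auto
    moreover from this(1) have "q = 2" using q(2) prime_gt_0_int[of q] by (simp add: nat_eq_iff)
    ultimately show False by simp
  qed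
  moreover have "finite (nat ` M)" "\<And>q. q \<in> nat ` M \<Longrightarrow> prime q"
    using assms(2,4) by auto
  ultimately obtain n0 where n0: "\<And>N. N \<ge> n0 \<Longrightarrow> \<exists>a. \<forall>i<N. shares_prime_in_block (nat ` M) a N i"
    using eventually_all_share_prime_in_block by blast
  show ?thesis
  proof (intro exI[of _ n0] allI impI)
    fix N assume "n0 \<le> N"
    then obtain a where "\<forall>i<N. shares_prime_in_block (nat ` M) a N i" using n0 by blast
    thus "\<exists>a. \<forall>i\<in>{0..<N}. gcd (a + int i) (\<Prod>j\<in>{0..<N} - {i}. a + int j) \<noteq> 1 \<and>
        (\<exists>p. prime p \<and> p \<notin> M \<and> p dvd gcd (a + int i) (\<Prod>j\<in>{0..<N} - {i}. a + int j))"
      by (intro exI[of _ a] ballI shares_prime_in_block_imp_gcd) simp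
  qed
qed

end
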